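(* Let $\Gamma$ be a distance-regular graph with diameter $D\ge3$ and intersection number $a_1\ne0$. Let $\sigma_0,\dots,\sigma_D$ and $\rho_0,\dots,\rho_D$ be nontrivial pseudo cosine sequences forming a tight pair, and let $\varepsilon$ be the corresponding auxiliary parameter. Then $\varepsilon\notin\{1,-1\}$, and $\sigma_{i-1}\ne\sigma_i$ and $\rho_{i-1}\ne\rho_i$ for $1\le i\le D$.
   Context: $\Gamma$ is a finite connected undirected graph without loops or multiple edges, distance-regular with diameter $D$, intersection numbers $a_i,b_i,c_i$ ($c_0=0$, $b_D=0$), valency $k$, $c_i+a_i+b_i=k$. For $\theta\in\mathbb{R}$ the pseudo cosine sequence for $\theta$ is the sequence of reals $\sigma_0,\dots,\sigma_D$ with $\sigma_0=1$ and $c_i\sigma_{i-1}+a_i\sigma_i+b_i\sigma_{i+1}=\theta\sigma_i$ for $0\le i\le D-1$; nontrivial means $\sigma_1\ne1$. Pseudo cosine sequences $\sigma_i$, $\rho_i$ form a tight pair if $(\sigma_i\rho_i)_{i=0}^D$ is a pseudo cosine sequence. For a tight pair of nontrivial pseudo cosine sequences, an auxiliary parameter is a real $\varepsilon$ with $\sigma_i\rho_i-\sigma_{i-1}\rho_{i-1}=\varepsilon(\sigma_{i-1}\rho_i-\sigma_i\rho_{i-1})$ for $1\le i\le D$ (if $\sigma_1\ne\rho_1$ it is unique, equal to $(\sigma_1\rho_1-1)/(\rho_1-\sigma_1)$). *)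

theory Defs
  imports Main "HOL-Library.Library"
begin

definition gdist :: "('a \<Rightarrow> 'a \<Rightarrow> bool) \<Rightarrow> 'a \<Rightarrow> 'a \<Rightarrow> nat" where
  "gdist E x y = (LEAST n. (E ^^ n) x y)"

definition simple_graph :: "'a set \<Rightarrow> ('a \<Rightarrow> 'a \<Rightarrow> bool) \<Rightarrow> bool" where
  "simple_graph V E \<longleftrightarrow> finite V \<and> V \<noteq> {} \<and>
     (\<forall>x y. E x y \<longrightarrow> x \<in> V \<and> y \<in> V) \<and>
     (\<forall>x y. E x y \<longrightarrow> E y x) \<and> (\<forall>x. \<not> E x x)"

definition connected_graph :: "'a set \<Rightarrow> ('a \<Rightarrow> 'a \<Rightarrow> bool) \<Rightarrow> bool" where
  "connected_graph V E \<longleftrightarrow> (\<forall>x\<in>V. \<forall>y\<in>V. \<exists>n. (E ^^ n) x y)"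

definition distance_regular ::
  "'a set \<Rightarrow> ('a \<Rightarrow> 'a \<Rightarrow> bool) \<Rightarrow> nat \<Rightarrow> (nat \<Rightarrow> nat) \<Rightarrow> (nat \<Rightarrow> nat) \<Rightarrow> (nat \<Rightarrow> nat) \<Rightarrow> bool" where
  "distance_regular V E D a b c \<longleftrightarrow>
     simple_graph V E \<and> connected_graph V E \<and>
     D = Max {gdist E x y | x y. x \<in> V \<and> y \<in> V} \<and>
     c 0 = 0 \<and> b D = 0 \<and>
     (\<forall>x\<in>V. \<forall>y\<in>V.
        (0 < gdist E x y \<longrightarrow>
           c (gdist E x y) = card {z \<in> V. E y z \<and> gdist E x z + 1 = gdist E x y}) \<and>
        a (gdist E x y) = card {z \<in> V. E y z \<and> gdist E x z = gdist E x y} \<and>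
        b (gdist E x y) = card {z \<in> V. E y z \<and> gdist E x z = gdist E x y + 1})"

definition pseudo_cosine_seq_for ::
  "nat \<Rightarrow> (nat \<Rightarrow> nat) \<Rightarrow> (nat \<Rightarrow> nat) \<Rightarrow> (nat \<Rightarrow> nat) \<Rightarrow> real \<Rightarrow> (nat \<Rightarrow> real) \<Rightarrow> bool" where
  "pseudo_cosine_seq_for D a b c \<theta> \<sigma> \<longleftrightarrow> \<sigma> 0 = 1 \<and>
     (\<forall>i<D. real (c i) * \<sigma> (i - 1) + real (a i) * \<sigma> i + real (b i) * \<sigma> (i + 1) = \<theta> * \<sigma> i)"

definition pseudo_cosine_seq ::
  "nat \<Rightarrow> (nat \<Rightarrow> nat) \<Rightarrow> (nat \<Rightarrow> nat) \<Rightarrow> (nat \<Rightarrow> nat) \<Rightarrow> (nat \<Rightarrow> real) \<Rightarrow> bool" where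
  "pseudo_cosine_seq D a b c \<sigma> \<longleftrightarrow> (\<exists>\<theta>. pseudo_cosine_seq_for D a b c \<theta> \<sigma>)"

definition tight_pair ::
  "nat \<Rightarrow> (nat \<Rightarrow> nat) \<Rightarrow> (nat \<Rightarrow> nat) \<Rightarrow> (nat \<Rightarrow> nat) \<Rightarrow> (nat \<Rightarrow> real) \<Rightarrow> (nat \<Rightarrow> real) \<Rightarrow> bool" where
  "tight_pair D a b c \<sigma> \<rho> \<longleftrightarrow> pseudo_cosine_seq D a b c \<sigma> \<and> pseudo_cosine_seq D a b c \<rho> \<and>
     pseudo_cosine_seq D a b c (\<lambda>i. \<sigma> i * \<rho> i)"

definition auxiliary_parameter ::
  "nat \<Rightarrow> (nat \<Rightarrow> real) \<Rightarrow> (nat \<Rightarrow> real) \<Rightarrow> real \<Rightarrow> bool" where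
  "auxiliary_parameter D \<sigma> \<rho> \<epsilon> \<longleftrightarrow>
     (\<forall>i\<in>{1..D}. \<sigma> i * \<rho> i - \<sigma> (i - 1) * \<rho> (i - 1) =
                   \<epsilon> * (\<sigma> (i - 1) * \<rho> i - \<sigma> i * \<rho> (i - 1)))"

end

theory Submission
  imports Defs
begin

(*
  Solving the recurrences of \<sigma>, \<rho> and \<sigma>\<rho> at index i for their (i+1)-st terms and computing
  b_i^2 \<sigma>_{i+1} \<rho>_{i+1} in two ways yields a polynomial identity in the entries of index i-1 and i
  (and symmetrically with the roles of b_i and c_i exchanged). At a step where both sequences are
  constant it reduces to k (k - b_i) (\<sigma>_1 - 1) (\<rho>_1 - 1) = 0, forcing b_i = k (or c_i = k), which
  contradicts c_i, b_i > 0. If only \<sigma> is constant at step i, the auxiliary parameter relation reads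
  (1 - \<epsilon>) \<sigma>_i (\<rho>_i - \<rho>_{i-1}) = 0, and \<sigma>_i \<noteq> 0 since a pseudo cosine sequence has no two
  consecutive zeros; so \<epsilon> \<noteq> \<plusminus>1 makes \<rho> constant there too. At i = 1 the relation says
  (\<sigma>_1 - 1)(\<rho>_1 + 1) = 0 when \<epsilon> = 1 and (\<sigma>_1 + 1)(\<rho>_1 - 1) = 0 when \<epsilon> = -1; the value
  \<sigma>_1 = -1 (and symmetrically \<rho>_1 = -1) is excluded by the identities at i = 1, 2 when a_1 \<noteq> 0.
*)

lemma gdist_path: "connected_graph V E \<Longrightarrow> x \<in> V \<Longrightarrow> y \<in> V \<Longrightarrow> (E ^^ gdist E x y) x y"
  unfolding gdist_def connected_graph_def by (meson LeastI_ex)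

lemma gdist_le: "(E ^^ n) x y \<Longrightarrow> gdist E x y \<le> n"
  unfolding gdist_def by (rule Least_le)

lemma gdist_eq_0_iff: "connected_graph V E \<Longrightarrow> x \<in> V \<Longrightarrow> y \<in> V \<Longrightarrow> gdist E x y = 0 \<longleftrightarrow> x = y"
  using gdist_path[of V E x y] gdist_le[of 0 E x x] by auto

lemma gdist_neighbour_le:
  "connected_graph V E \<Longrightarrow> x \<in> V \<Longrightarrow> y \<in> V \<Longrightarrow> E y z \<Longrightarrow> gdist E x z \<le> gdist E x y + 1"
  using gdist_path[of V E x y] gdist_le relpowp_Suc_I by fastforce

lemma gdist_Suc_predecessor:
  assumes "simple_graph V E" "connected_graph V E" "x \<in> V" "y \<in> V" "gdist E x y = Suc n"
  shows "\<exists>w\<in>V. E w y \<and> gdist E x w = n"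
proof -
  have "(E ^^ Suc n) x y" using gdist_path[OF assms(2-4)] assms(5) by simp
  then obtain w where w: "(E ^^ n) x w" "E w y" by (rule relpowp_Suc_E)
  have "w \<in> V" using assms(1) w(2) unfolding simple_graph_def by blast
  moreover have "gdist E x y \<le> gdist E x w + 1"
    using gdist_neighbour_le[OF assms(2,3) \<open>w \<in> V\<close> w(2)] .
  ultimately show ?thesis using gdist_le[OF w(1)] w(2) assms(5) by auto
qed

lemma gdist_layer_edge:
  assumes "simple_graph V E" "connected_graph V E" "x \<in> V"
  shows "y \<in> V \<Longrightarrow> gdist E x y = m \<Longrightarrow> j < m \<Longrightarrow>
    \<exists>u\<in>V. \<exists>v\<in>V. E u v \<and> gdist E x u = j \<and> gdist E x v = Suc j"
proof (induction m arbitrary: y)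
  case 0
  then show ?case by simp
next
  case (Suc n)
  obtain w where w: "w \<in> V" "E w y" "gdist E x w = n"
    using gdist_Suc_predecessor[OF assms Suc.prems(1,2)] by blast
  show ?case
  proof (cases "j = n")
    case True
    then show ?thesis using w Suc.prems by blast
  next
    case False
    then show ?thesis using Suc.IH[OF w(1,3)] Suc.prems(3) by simp
  qed
qed

lemma card_Collect_pos: "finite A \<Longrightarrow> x \<in> A \<Longrightarrow> P x \<Longrightarrow> 0 < card {z \<in> A. P z}"
  by (auto simp: card_gt_0_iff)

context
  fixes V E D a b c
  assumes drg: "distance_regular V E D a b c"
begin

private lemma simple: "simple_graph V E" and connected: "connected_graph V E"
  using drg unfolding distance_regular_def by auto

private lemma finite_V: "finite V" and irrefl: "\<not> E x x" and sym: "E x y \<Longrightarrow> E y x"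
  using simple unfolding simple_graph_def by auto

private lemma
  c_card: "x \<in> V \<Longrightarrow> y \<in> V \<Longrightarrow> 0 < gdist E x y \<Longrightarrow>
    c (gdist E x y) = card {z \<in> V. E y z \<and> gdist E x z + 1 = gdist E x y}" and
  a_card: "x \<in> V \<Longrightarrow> y \<in> V \<Longrightarrow>
    a (gdist E x y) = card {z \<in> V. E y z \<and> gdist E x z = gdist E x y}" and
  b_card: "x \<in> V \<Longrightarrow> y \<in> V \<Longrightarrow>
    b (gdist E x y) = card {z \<in> V. E y z \<and> gdist E x z = gdist E x y + 1}"
  using drg unfolding distance_regular_def by auto

private lemma diameter_attained: "\<exists>x\<in>V. \<exists>y\<in>V. gdist E x y = D"
proof -
  let ?dists = "{gdist E x y | x y. x \<in> V \<and> y \<in> V}"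
  have "finite V" "V \<noteq> {}" using simple unfolding simple_graph_def by auto
  then have "Max ?dists \<in> ?dists" by (intro Max_in) (auto simp: finite_image_set2)
  moreover have "D = Max ?dists" using drg unfolding distance_regular_def by blast
  ultimately have "D \<in> ?dists" by simp
  then show ?thesis by blast
qed

private lemma layer_edge:
  "j < D \<Longrightarrow> \<exists>x\<in>V. \<exists>u\<in>V. \<exists>v\<in>V. E u v \<and> gdist E x u = j \<and> gdist E x v = Suc j"
proof -
  assume "j < D"
  obtain x y where "x \<in> V" "y \<in> V" "gdist E x y = D" using diameter_attained by blast
  then show ?thesis using gdist_layer_edge[OF simple connected \<open>x \<in> V\<close>] \<open>j < D\<close> by blast
qed

lemma distance_regular_b_pos: "i < D \<Longrightarrow> 0 < b i"
proof -
  assume "i < D"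
  then obtain x u v where "x \<in> V" "u \<in> V" "v \<in> V" "E u v" "gdist E x u = i" "gdist E x v = Suc i"
    using layer_edge by blast
  then show "0 < b i" using b_card[of x u] card_Collect_pos[OF finite_V, of v] by simp
qed

lemma distance_regular_c_pos: "0 < i \<Longrightarrow> i \<le> D \<Longrightarrow> 0 < c i"
proof -
  assume "0 < i" "i \<le> D"
  then obtain j where "i = Suc j" "j < D" by (cases i) auto
  then obtain x u v where "x \<in> V" "u \<in> V" "v \<in> V" "E u v" "gdist E x u = j" "gdist E x v = i"
    using layer_edge by blast
  then show "0 < c i"
    using c_card[of x v] card_Collect_pos[OF finite_V, of u] sym \<open>i = Suc j\<close> by simp
qed

private lemma distance_attained: "i \<le> D \<Longrightarrow> \<exists>x\<in>V. \<exists>y\<in>V. gdist E x y = i"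
  using layer_edge[of "i - 1"] diameter_attained by (cases i) auto

lemma distance_regular_a_0: "a 0 = 0"
proof -
  obtain x where "x \<in> V" using diameter_attained by blast
  then have "gdist E x x = 0" using gdist_eq_0_iff[OF connected] by blast
  moreover have "{z \<in> V. E x z \<and> gdist E x z = 0} = {}"
    using gdist_eq_0_iff[OF connected \<open>x \<in> V\<close>] irrefl by auto
  ultimately show ?thesis using a_card[OF \<open>x \<in> V\<close> \<open>x \<in> V\<close>] by (metis card.empty)
qed

lemma distance_regular_c_1: "1 \<le> D \<Longrightarrow> c 1 = 1"
proof -
  assume "1 \<le> D"
  then obtain x y where "x \<in> V" "y \<in> V" "gdist E x y = 1" using distance_attained by blast
  moreover from this have "E x y" using gdist_path[OF connected, of x y] by auto
  ultimately have "{z \<in> V. E y z \<and> gdist E x z + 1 = gdist E x y} = {x}"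
    using gdist_eq_0_iff[OF connected] sym by auto
  then show ?thesis using c_card[OF \<open>x \<in> V\<close> \<open>y \<in> V\<close>] \<open>gdist E x y = 1\<close> by simp
qed

lemma distance_regular_valency: "0 < i \<Longrightarrow> i \<le> D \<Longrightarrow> c i + a i + b i = b 0"
proof -
  assume "0 < i" "i \<le> D"
  then obtain x y where xy: "x \<in> V" "y \<in> V" "gdist E x y = i" using distance_attained by blast
  let ?C = "{z \<in> V. E y z \<and> gdist E x z + 1 = i}"
  let ?A = "{z \<in> V. E y z \<and> gdist E x z = i}"
  let ?B = "{z \<in> V. E y z \<and> gdist E x z = i + 1}"
  have neighbours: "{z \<in> V. E y z} = ?C \<union> ?A \<union> ?B"
  proof safe
    fix z assume z: "z \<in> V" "E y z" "gdist E x z \<noteq> i" "gdist E x z \<noteq> i + 1"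
    have "gdist E x z \<le> i + 1" using gdist_neighbour_le[OF connected xy(1,2) z(2)] xy(3) by simp
    moreover have "i \<le> gdist E x z + 1" using gdist_neighbour_le[OF connected xy(1) z(1) sym[OF z(2)]] xy(3) by simp
    ultimately show "gdist E x z + 1 = i" using z(3,4) by linarith
  qed
  have "b 0 = card {z \<in> V. E y z}"
  proof -
    have yy: "gdist E y y = 0" using gdist_eq_0_iff[OF connected xy(2,2)] by simp
    have "gdist E y z = 1" if "z \<in> V" "E y z" for z
      using gdist_neighbour_le[OF connected xy(2,2) that(2)] gdist_eq_0_iff[OF connected xy(2) that(1)]
        irrefl that yy by fastforce
    then have "{z \<in> V. E y z} = {z \<in> V. E y z \<and> gdist E y z = gdist E y y + 1}"
      using yy by auto
    then show ?thesis using b_card[OF xy(2,2)] yy by simp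
  qed
  also have "\<dots> = card ?C + card ?A + card ?B"
    unfolding neighbours using finite_V
    by (subst card_Un_disjoint, auto, subst card_Un_disjoint, auto)
  finally show ?thesis using c_card[OF xy(1,2)] a_card[OF xy(1,2)] b_card[OF xy(1,2)] xy(3) \<open>0 < i\<close> by simp
qed

end

lemma pseudo_cosine_seq_for_recurrence:
  "pseudo_cosine_seq_for D a b c \<theta> \<sigma> \<Longrightarrow> i < D \<Longrightarrow>
    real (c i) * \<sigma> (i - 1) + real (a i) * \<sigma> i + real (b i) * \<sigma> (i + 1) = \<theta> * \<sigma> i"
  unfolding pseudo_cosine_seq_for_def by blast

lemma tight_pair_forward_identity:
  assumes "pseudo_cosine_seq_for D a b c \<theta> \<sigma>" "pseudo_cosine_seq_for D a b c \<theta>' \<rho>"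
    and "pseudo_cosine_seq_for D a b c \<theta>'' (\<lambda>i. \<sigma> i * \<rho> i)" and "i < D"
  shows "(\<theta> * \<sigma> i - a i * \<sigma> i - c i * \<sigma> (i - 1)) * (\<theta>' * \<rho> i - a i * \<rho> i - c i * \<rho> (i - 1))
    = b i * (\<theta>'' * (\<sigma> i * \<rho> i) - a i * (\<sigma> i * \<rho> i) - c i * (\<sigma> (i - 1) * \<rho> (i - 1)))"
proof -
  have "\<theta> * \<sigma> i - a i * \<sigma> i - c i * \<sigma> (i - 1) = b i * \<sigma> (i + 1)"
    and "\<theta>' * \<rho> i - a i * \<rho> i - c i * \<rho> (i - 1) = b i * \<rho> (i + 1)"
    and "\<theta>'' * (\<sigma> i * \<rho> i) - a i * (\<sigma> i * \<rho> i) - c i * (\<sigma> (i - 1) * \<rho> (i - 1))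
      = b i * (\<sigma> (i + 1) * \<rho> (i + 1))"
    using pseudo_cosine_seq_for_recurrence[OF assms(1,4)] pseudo_cosine_seq_for_recurrence[OF assms(2,4)]
      pseudo_cosine_seq_for_recurrence[OF assms(3,4)] by (simp_all add: algebra_simps)
  then show ?thesis by (simp add: algebra_simps)
qed

lemma tight_pair_backward_identity:
  assumes "pseudo_cosine_seq_for D a b c \<theta> \<sigma>" "pseudo_cosine_seq_for D a b c \<theta>' \<rho>"
    and "pseudo_cosine_seq_for D a b c \<theta>'' (\<lambda>i. \<sigma> i * \<rho> i)" and "i < D"
  shows "(\<theta> * \<sigma> i - a i * \<sigma> i - b i * \<sigma> (i + 1)) * (\<theta>' * \<rho> i - a i * \<rho> i - b i * \<rho> (i + 1))
    = c i * (\<theta>'' * (\<sigma> i * \<rho> i) - a i * (\<sigma> i * \<rho> i) - b i * (\<sigma> (i + 1) * \<rho> (i + 1)))"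
proof -
  have "\<theta> * \<sigma> i - a i * \<sigma> i - b i * \<sigma> (i + 1) = c i * \<sigma> (i - 1)"
    and "\<theta>' * \<rho> i - a i * \<rho> i - b i * \<rho> (i + 1) = c i * \<rho> (i - 1)"
    and "\<theta>'' * (\<sigma> i * \<rho> i) - a i * (\<sigma> i * \<rho> i) - b i * (\<sigma> (i + 1) * \<rho> (i + 1))
      = c i * (\<sigma> (i - 1) * \<rho> (i - 1))"
    using pseudo_cosine_seq_for_recurrence[OF assms(1,4)] pseudo_cosine_seq_for_recurrence[OF assms(2,4)]
      pseudo_cosine_seq_for_recurrence[OF assms(3,4)] by (simp_all add: algebra_simps)
  then show ?thesis by (simp add: algebra_simps)
qed

text \<open>With \<open>k = b\<^sub>0\<close>, \<open>s = \<sigma>\<^sub>1\<close>, \<open>r = \<rho>\<^sub>1\<close>, \<open>u = \<sigma>\<^sub>i\<close>, \<open>v = \<rho>\<^sub>i\<close>, the hypothesis is one of the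
  product identities above at a step where both sequences are constant, \<open>x\<close> being the one
  intersection number that does not cancel.\<close>

lemma flat_step_weight_eq:
  fixes k s r x u v :: real
  assumes "(k * s - k + x) * u * ((k * r - k + x) * v) = x * ((k * s * r - k + x) * (u * v))"
    and "u \<noteq> 0" "v \<noteq> 0" "k \<noteq> 0" "s \<noteq> 1" "r \<noteq> 1"
  shows "x = k"
proof -
  have "k * (k - x) * (s - 1) * (r - 1) * (u * v) = 0"
    using assms(1) by (simp add: algebra_simps)
  then show ?thesis using assms(2-6) by simp
qed

text \<open>Here \<open>k, A\<^sub>j, B\<^sub>j, C\<^sub>j, r\<^sub>j, s\<^sub>j\<close> stand for \<open>b\<^sub>0, a\<^sub>j, b\<^sub>j, c\<^sub>j, \<rho>\<^sub>j, \<sigma>\<^sub>j\<close>: the hypotheses are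
  the recurrences at index 1 and the product identity at indices 1 and 2, evaluated at \<open>\<sigma>\<^sub>1 = -1\<close>.
  They force \<open>\<rho>\<^sub>1 = \<rho>\<^sub>2 = -1/k\<close> and then \<open>c\<^sub>2 = \<sigma>\<^sub>2 (c\<^sub>2 + 2 a\<^sub>2)\<close> with \<open>\<sigma>\<^sub>2 > 1\<close>.\<close>

lemma tight_pair_minus_one_inconsistent:
  fixes k A\<^sub>1 B\<^sub>1 A\<^sub>2 B\<^sub>2 C\<^sub>2 r\<^sub>1 r\<^sub>2 s\<^sub>2 :: real
  assumes "k = 1 + A\<^sub>1 + B\<^sub>1" "k = C\<^sub>2 + A\<^sub>2 + B\<^sub>2" "0 < A\<^sub>1" "0 < B\<^sub>1" "0 < C\<^sub>2" "0 \<le> A\<^sub>2" "r\<^sub>1 \<noteq> 1"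
    and \<sigma>_rec: "1 - A\<^sub>1 + B\<^sub>1 * s\<^sub>2 = k"
    and \<rho>_rec: "1 + A\<^sub>1 * r\<^sub>1 + B\<^sub>1 * r\<^sub>2 = k * r\<^sub>1 * r\<^sub>1"
    and tight_1: "(k + A\<^sub>1 - 1) * (k * r\<^sub>1 * r\<^sub>1 - A\<^sub>1 * r\<^sub>1 - 1) = B\<^sub>1 * (k * r\<^sub>1 * r\<^sub>1 + A\<^sub>1 * r\<^sub>1 - 1)"
    and tight_2: "(- k * s\<^sub>2 - A\<^sub>2 * s\<^sub>2 + C\<^sub>2) * (k * r\<^sub>1 * r\<^sub>2 - A\<^sub>2 * r\<^sub>2 - C\<^sub>2 * r\<^sub>1)
      = B\<^sub>2 * (- k * r\<^sub>1 * s\<^sub>2 * r\<^sub>2 - A\<^sub>2 * s\<^sub>2 * r\<^sub>2 + C\<^sub>2 * r\<^sub>1)"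
  shows False
proof -
  have "0 < k" using assms(1,3,4) by simp
  have "2 * A\<^sub>1 * (k * r\<^sub>1 + 1) * (r\<^sub>1 - 1) = 0"
    using tight_1 unfolding assms(1) by (simp add: algebra_simps)
  then have "k * r\<^sub>1 + 1 = 0" using assms(3,7) by simp
  then have r\<^sub>1: "r\<^sub>1 = - 1 / k" using \<open>0 < k\<close> by (simp add: field_simps)
  have "k - A\<^sub>1 + B\<^sub>1 * (k * r\<^sub>2) = 1"
    using \<rho>_rec \<open>0 < k\<close> unfolding r\<^sub>1 by (simp add: field_simps)
  then have "B\<^sub>1 * (k * r\<^sub>2 + 1) = 0" unfolding distrib_left using assms(1) by linarith
  then have "k * r\<^sub>2 + 1 = 0" using assms(4) by simp
  then have r\<^sub>2: "r\<^sub>2 = - 1 / k" using \<open>0 < k\<close> by (simp add: field_simps)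
  have "k * k * ((C\<^sub>2 - (k + A\<^sub>2) * s\<^sub>2) * (1 + A\<^sub>2 + C\<^sub>2) - B\<^sub>2 * (A\<^sub>2 * s\<^sub>2 - s\<^sub>2 - C\<^sub>2)) = 0"
    using tight_2 \<open>0 < k\<close> unfolding r\<^sub>1 r\<^sub>2 by (simp add: field_simps)
  then have "(C\<^sub>2 - (k + A\<^sub>2) * s\<^sub>2) * (1 + A\<^sub>2 + C\<^sub>2) - B\<^sub>2 * (A\<^sub>2 * s\<^sub>2 - s\<^sub>2 - C\<^sub>2) = 0"
    using \<open>0 < k\<close> by (simp only: mult_eq_0_iff) simp
  then have "(k + 1) * (C\<^sub>2 - s\<^sub>2 * (C\<^sub>2 + 2 * A\<^sub>2)) = 0"
    unfolding assms(2) by (simp add: algebra_simps)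
  then have "C\<^sub>2 = s\<^sub>2 * (C\<^sub>2 + 2 * A\<^sub>2)" using \<open>0 < k\<close> by simp
  moreover have "1 < s\<^sub>2"
  proof -
    have "B\<^sub>1 * 1 < B\<^sub>1 * s\<^sub>2" using \<sigma>_rec assms(1,3) by linarith
    then show ?thesis using assms(4) by (simp only: mult_less_cancel_left_pos)
  qed
  then have "C\<^sub>2 < s\<^sub>2 * C\<^sub>2" "s\<^sub>2 * C\<^sub>2 \<le> s\<^sub>2 * (C\<^sub>2 + 2 * A\<^sub>2)"
    using assms(5,6) by simp_all
  ultimately show False by linarith
qed

locale intersection_numbers =
  fixes D :: nat and a b c :: "nat \<Rightarrow> nat"
  assumes diameter_ge_1: "1 \<le> D"
    and a_0: "a 0 = 0" and c_0: "c 0 = 0" and c_1: "c 1 = 1"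
    and valency: "i \<le> D \<Longrightarrow> c i + a i + b i = b 0"
    and c_pos: "0 < i \<Longrightarrow> i \<le> D \<Longrightarrow> 0 < c i"
    and b_pos: "i < D \<Longrightarrow> 0 < b i"

lemma distance_regular_intersection_numbers:
  assumes "distance_regular V E D a b c" "1 \<le> D"
  shows "intersection_numbers D a b c"
proof
  show "c 0 = 0" using assms(1) unfolding distance_regular_def by blast
  then show "c i + a i + b i = b 0" if "i \<le> D" for i
    using distance_regular_valency[OF assms(1) _ that] distance_regular_a_0[OF assms(1)]
    by (cases i) auto
qed (use assms distance_regular_a_0 distance_regular_c_1 distance_regular_c_pos
      distance_regular_b_pos in auto)

context intersection_numbers
begin

lemma valency_pos: "0 < b 0"
  using b_pos diameter_ge_1 by simp

lemma pseudo_cosine_seq_for_eigenvalue: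
  fixes \<sigma> :: "nat \<Rightarrow> real"
  assumes "pseudo_cosine_seq_for D a b c \<theta> \<sigma>"
  shows "\<theta> = b 0 * \<sigma> 1"
  using pseudo_cosine_seq_for_recurrence[OF assms, of 0] assms diameter_ge_1 a_0 c_0
  unfolding pseudo_cosine_seq_for_def by simp

lemma pseudo_cosine_seq_for_no_double_zero:
  fixes \<sigma> :: "nat \<Rightarrow> real"
  assumes "pseudo_cosine_seq_for D a b c \<theta> \<sigma>"
  shows "Suc j \<le> D \<Longrightarrow> \<sigma> j = 0 \<Longrightarrow> \<sigma> (Suc j) \<noteq> 0"
proof (induction j)
  case 0
  then show ?case using assms unfolding pseudo_cosine_seq_for_def by simp
next
  case (Suc j)
  show ?case
  proof
    assume "\<sigma> (Suc (Suc j)) = 0"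
    then have "c (Suc j) * \<sigma> j = 0"
      using pseudo_cosine_seq_for_recurrence[OF assms, of "Suc j"] Suc.prems by simp
    then show False using c_pos[of "Suc j"] Suc by simp
  qed
qed

lemma pseudo_cosine_seq_for_flat_step_nonzero:
  fixes \<sigma> :: "nat \<Rightarrow> real"
  assumes "pseudo_cosine_seq_for D a b c \<theta> \<sigma>" "0 < i" "i \<le> D" "\<sigma> (i - 1) = \<sigma> i"
  shows "\<sigma> i \<noteq> 0"
  using pseudo_cosine_seq_for_no_double_zero[OF assms(1), of "i - 1"] assms(2-4) by auto

end

locale nontrivial_tight_pair = intersection_numbers +
  fixes \<sigma> \<rho> :: "nat \<Rightarrow> real" and \<theta> \<theta>' \<theta>'' :: real
  assumes \<sigma>: "pseudo_cosine_seq_for D a b c \<theta> \<sigma>"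
    and \<rho>: "pseudo_cosine_seq_for D a b c \<theta>' \<rho>"
    and \<sigma>\<rho>: "pseudo_cosine_seq_for D a b c \<theta>'' (\<lambda>i. \<sigma> i * \<rho> i)"
    and \<sigma>_1: "\<sigma> 1 \<noteq> 1" and \<rho>_1: "\<rho> 1 \<noteq> 1"
begin

lemma swap: "nontrivial_tight_pair D a b c \<rho> \<sigma> \<theta>' \<theta> \<theta>''"
proof unfold_locales
  show "pseudo_cosine_seq_for D a b c \<theta>'' (\<lambda>i. \<rho> i * \<sigma> i)"
    using \<sigma>\<rho> by (simp add: mult.commute)
qed (fact \<sigma> \<rho> \<sigma>_1 \<rho>_1)+

lemma initial_values: "\<sigma> 0 = 1" "\<rho> 0 = 1"
  using \<sigma> \<rho> unfolding pseudo_cosine_seq_for_def by simp_all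

lemma eigenvalues: "\<theta> = b 0 * \<sigma> 1" "\<theta>' = b 0 * \<rho> 1" "\<theta>'' = b 0 * \<sigma> 1 * \<rho> 1"
  using pseudo_cosine_seq_for_eigenvalue[OF \<sigma>] pseudo_cosine_seq_for_eigenvalue[OF \<rho>]
    pseudo_cosine_seq_for_eigenvalue[OF \<sigma>\<rho>] by simp_all

lemma no_flat_forward_step:
  assumes "0 < i" "i < D" "\<sigma> (i - 1) = \<sigma> i" "\<rho> (i - 1) = \<rho> i"
  shows False
proof -
  define k where "k = real (b 0)"
  have a_i: "real (a i) = k - b i - c i" using valency[of i] assms(2) unfolding k_def by simp
  have "\<sigma> i \<noteq> 0" "\<rho> i \<noteq> 0"
    using pseudo_cosine_seq_for_flat_step_nonzero[OF \<sigma>] pseudo_cosine_seq_for_flat_step_nonzero[OF \<rho>]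
      assms by auto
  moreover have "k \<noteq> 0" using valency_pos unfolding k_def by simp
  moreover have "(k * \<sigma> 1 - k + b i) * \<sigma> i * ((k * \<rho> 1 - k + b i) * \<rho> i)
      = b i * ((k * \<sigma> 1 * \<rho> 1 - k + b i) * (\<sigma> i * \<rho> i))"
    using tight_pair_forward_identity[OF \<sigma> \<rho> \<sigma>\<rho> assms(2)] assms(3,4) eigenvalues
    by (simp add: a_i k_def[symmetric] algebra_simps)
  ultimately have "b i = k" using flat_step_weight_eq \<sigma>_1 \<rho>_1 by blast
  then show False using valency[of i] c_pos[of i] assms(1,2) unfolding k_def by simp
qed

lemma no_flat_backward_step:
  assumes "j < D" "\<sigma> (j + 1) = \<sigma> j" "\<rho> (j + 1) = \<rho> j"
  shows False
proof -
  define k where "k = real (b 0)"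
  have a_j: "real (a j) = k - b j - c j" using valency[of j] assms(1) unfolding k_def by simp
  have "\<sigma> j \<noteq> 0" "\<rho> j \<noteq> 0"
    using pseudo_cosine_seq_for_no_double_zero[OF \<sigma>, of j]
      pseudo_cosine_seq_for_no_double_zero[OF \<rho>, of j] assms by auto
  moreover have "k \<noteq> 0" using valency_pos unfolding k_def by simp
  moreover have "(k * \<sigma> 1 - k + c j) * \<sigma> j * ((k * \<rho> 1 - k + c j) * \<rho> j)
      = c j * ((k * \<sigma> 1 * \<rho> 1 - k + c j) * (\<sigma> j * \<rho> j))"
    using tight_pair_backward_identity[OF \<sigma> \<rho> \<sigma>\<rho> assms(1)] assms(2,3) eigenvalues
    by (simp add: a_j k_def[symmetric] algebra_simps)
  ultimately have "c j = k" using flat_step_weight_eq \<sigma>_1 \<rho>_1 by blast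
  then show False using valency[of j] b_pos[of j] assms(1) unfolding k_def by simp
qed

lemma no_common_flat_step:
  assumes "0 < i" "i \<le> D" "\<sigma> (i - 1) = \<sigma> i" "\<rho> (i - 1) = \<rho> i"
  shows False
proof (cases "i < D")
  case True
  then show False using no_flat_forward_step assms by blast
next
  case False
  then show False using no_flat_backward_step[of "i - 1"] assms by simp
qed

lemma sigma_1_ne_minus_1:
  assumes "a 1 \<noteq> 0" "3 \<le> D"
  shows "\<sigma> 1 \<noteq> -1"
proof
  assume \<sigma>_1_eq: "\<sigma> 1 = -1"
  have \<theta>s: "\<theta> = - real (b 0)" "\<theta>' = b 0 * \<rho> 1" "\<theta>'' = - real (b 0) * \<rho> 1"
    using eigenvalues \<sigma>_1_eq by simp_all
  have k_1: "real (b 0) = 1 + real (a 1) + real (b 1)"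
    and k_2: "real (b 0) = real (c 2) + real (a 2) + real (b 2)"
    using valency[of 1] valency[of 2] c_1 assms(2) by simp_all
  have "c 1 * \<sigma> 0 + a 1 * \<sigma> 1 + b 1 * \<sigma> 2 = \<theta> * \<sigma> 1"
    "c 1 * \<rho> 0 + a 1 * \<rho> 1 + b 1 * \<rho> 2 = \<theta>' * \<rho> 1"
    using pseudo_cosine_seq_for_recurrence[OF \<sigma>, of 1] pseudo_cosine_seq_for_recurrence[OF \<rho>, of 1]
      assms(2) by (simp_all add: numeral_2_eq_2)
  then have \<sigma>_rec: "1 - real (a 1) + b 1 * \<sigma> 2 = b 0"
    and \<rho>_rec: "1 + a 1 * \<rho> 1 + b 1 * \<rho> 2 = b 0 * \<rho> 1 * \<rho> 1"
    using \<theta>s initial_values \<sigma>_1_eq c_1 by simp_all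
  have "(\<theta> * \<sigma> 1 - a 1 * \<sigma> 1 - c 1 * \<sigma> 0) * (\<theta>' * \<rho> 1 - a 1 * \<rho> 1 - c 1 * \<rho> 0)
    = b 1 * (\<theta>'' * (\<sigma> 1 * \<rho> 1) - a 1 * (\<sigma> 1 * \<rho> 1) - c 1 * (\<sigma> 0 * \<rho> 0))"
    using tight_pair_forward_identity[OF \<sigma> \<rho> \<sigma>\<rho>, of 1] assms(2) by simp
  then have tight_1: "(real (b 0) + a 1 - 1) * (b 0 * \<rho> 1 * \<rho> 1 - a 1 * \<rho> 1 - 1)
    = b 1 * (b 0 * \<rho> 1 * \<rho> 1 + a 1 * \<rho> 1 - 1)"
    using \<theta>s initial_values \<sigma>_1_eq c_1 by (simp add: algebra_simps)
  have "(\<theta> * \<sigma> 2 - a 2 * \<sigma> 2 - c 2 * \<sigma> 1) * (\<theta>' * \<rho> 2 - a 2 * \<rho> 2 - c 2 * \<rho> 1)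
    = b 2 * (\<theta>'' * (\<sigma> 2 * \<rho> 2) - a 2 * (\<sigma> 2 * \<rho> 2) - c 2 * (\<sigma> 1 * \<rho> 1))"
    using tight_pair_forward_identity[OF \<sigma> \<rho> \<sigma>\<rho>, of 2] assms(2) by simp
  then have tight_2: "(- real (b 0) * \<sigma> 2 - a 2 * \<sigma> 2 + c 2) * (b 0 * \<rho> 1 * \<rho> 2 - a 2 * \<rho> 2 - c 2 * \<rho> 1)
    = b 2 * (- real (b 0) * \<rho> 1 * \<sigma> 2 * \<rho> 2 - a 2 * \<sigma> 2 * \<rho> 2 + c 2 * \<rho> 1)"
    using \<theta>s \<sigma>_1_eq by (simp add: algebra_simps)
  show False
    using tight_pair_minus_one_inconsistent[OF k_1 k_2 _ _ _ _ \<rho>_1 \<sigma>_rec \<rho>_rec tight_1 tight_2]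
      assms b_pos[of 1] c_pos[of 2] by simp
qed

lemma rho_1_ne_minus_1: "a 1 \<noteq> 0 \<Longrightarrow> 3 \<le> D \<Longrightarrow> \<rho> 1 \<noteq> -1"
  by (rule nontrivial_tight_pair.sigma_1_ne_minus_1[OF swap])

lemma auxiliary_parameter_ne_plus_minus_1:
  assumes "auxiliary_parameter D \<sigma> \<rho> \<epsilon>" "\<sigma> 1 \<noteq> -1" "\<rho> 1 \<noteq> -1"
  shows "\<epsilon> \<noteq> 1" "\<epsilon> \<noteq> -1"
proof -
  have aux_1: "\<sigma> 1 * \<rho> 1 - 1 = \<epsilon> * (\<rho> 1 - \<sigma> 1)"
    using assms(1) diameter_ge_1 initial_values unfolding auxiliary_parameter_def by force
  show "\<epsilon> \<noteq> 1"
  proof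
    assume "\<epsilon> = 1"
    then have "(\<sigma> 1 - 1) * (\<rho> 1 + 1) = 0" using aux_1 by (simp add: algebra_simps)
    then show False using \<sigma>_1 assms(3) by simp
  qed
  show "\<epsilon> \<noteq> -1"
  proof
    assume "\<epsilon> = -1"
    then have "(\<sigma> 1 + 1) * (\<rho> 1 - 1) = 0" using aux_1 by (simp add: algebra_simps)
    then show False using \<rho>_1 assms(2) by simp
  qed
qed

lemma consecutive_entries_differ:
  assumes "auxiliary_parameter D \<sigma> \<rho> \<epsilon>" "\<epsilon> \<noteq> 1" "\<epsilon> \<noteq> -1" "0 < i" "i \<le> D"
  shows "\<sigma> (i - 1) \<noteq> \<sigma> i" "\<rho> (i - 1) \<noteq> \<rho> i"
proof -
  have aux_i: "\<sigma> i * \<rho> i - \<sigma> (i - 1) * \<rho> (i - 1) = \<epsilon> * (\<sigma> (i - 1) * \<rho> i - \<sigma> i * \<rho> (i - 1))"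
    using assms(1,4,5) unfolding auxiliary_parameter_def by simp
  show "\<sigma> (i - 1) \<noteq> \<sigma> i"
  proof
    assume flat: "\<sigma> (i - 1) = \<sigma> i"
    then have "\<sigma> i \<noteq> 0" using pseudo_cosine_seq_for_flat_step_nonzero[OF \<sigma>] assms(4,5) by blast
    moreover have "(1 - \<epsilon>) * \<sigma> i * (\<rho> i - \<rho> (i - 1)) = 0" using aux_i flat by (simp add: algebra_simps)
    ultimately have "\<rho> (i - 1) = \<rho> i" using assms(2) by simp
    then show False using no_common_flat_step assms(4,5) flat by blast
  qed
  show "\<rho> (i - 1) \<noteq> \<rho> i"
  proof
    assume flat: "\<rho> (i - 1) = \<rho> i"
    then have "\<rho> i \<noteq> 0" using pseudo_cosine_seq_for_flat_step_nonzero[OF \<rho>] assms(4,5) by blast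
    moreover have "(1 + \<epsilon>) * \<rho> i * (\<sigma> i - \<sigma> (i - 1)) = 0" using aux_i flat by (simp add: algebra_simps)
    ultimately have "\<sigma> (i - 1) = \<sigma> i" using assms(3) by simp
    then show False using no_common_flat_step assms(4,5) flat by blast
  qed
qed

end

theorem corollary8p6:
  fixes V :: "'a set" and E :: "'a \<Rightarrow> 'a \<Rightarrow> bool" and D :: nat
    and a b c :: "nat \<Rightarrow> nat" and \<sigma> \<rho> :: "nat \<Rightarrow> real" and \<epsilon> :: real
  assumes "distance_regular V E D a b c"
    and "D \<ge> 3"
    and "a 1 \<noteq> 0"
    and "pseudo_cosine_seq D a b c \<sigma>" and "\<sigma> 1 \<noteq> 1"
    and "pseudo_cosine_seq D a b c \<rho>" and "\<rho> 1 \<noteq> 1"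
    and "tight_pair D a b c \<sigma> \<rho>"
    and "auxiliary_parameter D \<sigma> \<rho> \<epsilon>"
  shows "\<epsilon> \<noteq> 1 \<and> \<epsilon> \<noteq> -1 \<and> (\<forall>i\<in>{1..D}. \<sigma> (i - 1) \<noteq> \<sigma> i \<and> \<rho> (i - 1) \<noteq> \<rho> i)"
proof -
  interpret intersection_numbers D a b c
    using distance_regular_intersection_numbers[OF assms(1)] assms(2) by simp
  obtain \<theta> \<theta>' \<theta>'' where "pseudo_cosine_seq_for D a b c \<theta> \<sigma>" "pseudo_cosine_seq_for D a b c \<theta>' \<rho>"
    "pseudo_cosine_seq_for D a b c \<theta>'' (\<lambda>i. \<sigma> i * \<rho> i)"
    using assms(8) unfolding tight_pair_def pseudo_cosine_seq_def by blast
  then interpret nontrivial_tight_pair D a b c \<sigma> \<rho> \<theta> \<theta>' \<theta>''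
    using assms(5,7) by unfold_locales
  have "\<sigma> 1 \<noteq> -1" "\<rho> 1 \<noteq> -1" using sigma_1_ne_minus_1 rho_1_ne_minus_1 assms(2,3) by auto
  then have "\<epsilon> \<noteq> 1" "\<epsilon> \<noteq> -1" using auxiliary_parameter_ne_plus_minus_1 assms(9) by auto
  then show ?thesis using consecutive_entries_differ assms(9) by auto
qed

end
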